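(* Let $m>1$ be odd. There exists an OQS of length $m$ if and only if there exists a normalized cocycle $\psi\in Z^2(\mathbb{Z}_2\times\mathbb{Z}_m,\langle-1\rangle)$ that is quasi-orthogonal and is not a coboundary.
   Context: A quaternary sequence $f:\mathbb{Z}_m\to\{\pm1,\pm\mathrm{i}\}$ of odd length $m$ is an OQS if $|R_f(w)|=1$ for all $1\le w\le m-1$, where $R_f(w)=\sum_{k\in\mathbb{Z}_m}f(k)\overline{f(k+w)}$. For a finite group $G$, a cocycle is a map $\psi:G\times G\to\langle-1\rangle=\{\pm1\}$ with $\psi(g,h)\psi(gh,k)=\psi(g,hk)\psi(h,k)$ for all $g,h,k\in G$; it is normalized if $\psi(1,1)=1$. These form a group $Z^2(G,\langle-1\rangle)$ under pointwise multiplication. For $\phi:G\to\{\pm1\}$, the coboundary $\partial\phi(g,h)=\phi(g)^{-1}\phi(h)^{-1}\phi(gh)$; coboundaries form the subgroup $B^2(G,\langle-1\rangle)$. The cocyclic matrix is $M_\psi=[\psi(g,h)]_{g,h\in G}$. Its row excess $RE(M_\psi)$ is the sum of the absolute values of all row sums of $M_\psi$ except the row indexed by the identity. If $|G|=4t+2$, a normalized cocycle $\psi$ is quasi-orthogonal if either $\psi\notin B^2(G,\langle-1\rangle)$ and $RE(M_\psi)=4t$, or $\psi\in B^2(G,\langle-1\rangle)$ and $RE(M_\psi)=8t+2$. *)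

theory Defs
  imports Complex_Main "HOL-Algebra.Elementary_Groups"
begin

definition autocorr :: "nat \<Rightarrow> (nat \<Rightarrow> complex) \<Rightarrow> nat \<Rightarrow> complex" where
  "autocorr m f w = (\<Sum>k<m. f k * cnj (f ((k + w) mod m)))"

definition OQS :: "nat \<Rightarrow> (nat \<Rightarrow> complex) \<Rightarrow> bool" where
  "OQS m f \<longleftrightarrow> odd m \<and> (\<forall>k<m. f k \<in> {1, -1, \<i>, -\<i>})
     \<and> (\<forall>w\<in>{1..m-1}. cmod (autocorr m f w) = 1)"

text \<open>Cocycles G x G -> <-1> = {1,-1}, values written as integers.\<close>
definition cocycle :: "('a, 'b) monoid_scheme \<Rightarrow> ('a \<Rightarrow> 'a \<Rightarrow> int) \<Rightarrow> bool" where
  "cocycle G \<psi> \<longleftrightarrow>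
     (\<forall>g\<in>carrier G. \<forall>h\<in>carrier G. \<psi> g h \<in> {1, -1}) \<and>
     (\<forall>g\<in>carrier G. \<forall>h\<in>carrier G. \<forall>k\<in>carrier G.
        \<psi> g h * \<psi> (g \<otimes>\<^bsub>G\<^esub> h) k = \<psi> g (h \<otimes>\<^bsub>G\<^esub> k) * \<psi> h k)"

definition normalized_cocycle :: "('a, 'b) monoid_scheme \<Rightarrow> ('a \<Rightarrow> 'a \<Rightarrow> int) \<Rightarrow> bool" where
  "normalized_cocycle G \<psi> \<longleftrightarrow> cocycle G \<psi> \<and> \<psi> \<one>\<^bsub>G\<^esub> \<one>\<^bsub>G\<^esub> = 1"

text \<open>Coboundary of phi : G -> {1,-1}: phi(g)^-1 phi(h)^-1 phi(gh) (inverses are trivial in {1,-1}).\<close>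
definition coboundary :: "('a, 'b) monoid_scheme \<Rightarrow> ('a \<Rightarrow> 'a \<Rightarrow> int) \<Rightarrow> bool" where
  "coboundary G \<psi> \<longleftrightarrow>
     (\<exists>\<phi>. (\<forall>g\<in>carrier G. \<phi> g \<in> {1, -1}) \<and>
          (\<forall>g\<in>carrier G. \<forall>h\<in>carrier G. \<psi> g h = \<phi> g * \<phi> h * \<phi> (g \<otimes>\<^bsub>G\<^esub> h)))"

definition row_excess :: "('a, 'b) monoid_scheme \<Rightarrow> ('a \<Rightarrow> 'a \<Rightarrow> int) \<Rightarrow> int" where
  "row_excess G \<psi> = (\<Sum>g\<in>carrier G - {\<one>\<^bsub>G\<^esub>}. \<bar>\<Sum>h\<in>carrier G. \<psi> g h\<bar>)"

definition quasi_orthogonal :: "('a, 'b) monoid_scheme \<Rightarrow> ('a \<Rightarrow> 'a \<Rightarrow> int) \<Rightarrow> bool" where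
  "quasi_orthogonal G \<psi> \<longleftrightarrow> normalized_cocycle G \<psi> \<and>
     (\<exists>t::nat. card (carrier G) = 4*t + 2 \<and>
        ((\<not> coboundary G \<psi> \<and> row_excess G \<psi> = 4 * int t) \<or>
         (coboundary G \<psi> \<and> row_excess G \<psi> = 8 * int t + 2)))"

end

theory Submission
  imports Defs
begin

text \<open>For odd \<open>m\<close>, averaging a \<open>\<pm>1\<close>-cocycle over the cosets of \<open>{0} \<times> \<int>\<^sub>m\<close> (possible because
  \<open>x\<^sup>m = x\<close> for \<open>x = \<pm>1\<close>) shows that every cocycle on \<open>\<int>\<^sub>2 \<times> \<int>\<^sub>m\<close> is cohomologous to the trivial
  one or to \<open>\<beta>\<close>, the inflation of the non-trivial cocycle of \<open>\<int>\<^sub>2\<close>. So the cocycles that are not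
  coboundaries are the \<open>\<beta> \<cdot> \<partial>\<Phi>\<close>. Reading \<open>\<Phi>\<close> on the two cosets as \<open>\<pm>1\<close> sequences \<open>a, b\<close>, the rows
  of \<open>\<beta> \<cdot> \<partial>\<Phi>\<close> sum to \<open>\<pm>S(w)\<close> and \<open>\<pm>D(w)\<close>, where \<open>S\<close> is the sum of the periodic autocorrelations of
  \<open>a\<close> and \<open>b\<close> and \<open>D\<close> their antisymmetrised cross-correlation, while the quaternary sequence
  \<open>f = ((a + b) + \<i>(b - a))/2\<close> has \<open>R\<^sub>f(w) = (S(w) + \<i> D(w))/2\<close>. As \<open>S(w) \<equiv> 2 (mod 4)\<close>, the row excess is
  at least \<open>2(m - 1) = 4t\<close>, with equality iff \<open>|S(w)| = 2\<close> and \<open>D(w) = 0\<close> for all \<open>w \<noteq> 0\<close>, which is exactly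
  \<open>|R\<^sub>f(w)| = 1\<close>.\<close>

lemma pm_one_mult: "(x::int) \<in> {1,-1} \<Longrightarrow> y \<in> {1,-1} \<Longrightarrow> x * y \<in> {1,-1}"
  by auto

lemma pm_one_square: "(x::int) \<in> {1,-1} \<Longrightarrow> x * x = 1"
  by auto

lemma pm_one_power_odd: "(x::int) \<in> {1,-1} \<Longrightarrow> odd n \<Longrightarrow> x ^ n = x"
  by (auto simp: power_minus_odd)

lemma prod_pm_one: "(\<And>x. x \<in> S \<Longrightarrow> f x \<in> {1,-1::int}) \<Longrightarrow> prod f S \<in> {1,-1}"
proof (induction S rule: infinite_finite_induct)
  case (insert x F)
  have "f x * prod f F \<in> {1,-1}"
    by (rule pm_one_mult) (use insert in auto)
  with insert(1,2) show ?case by simp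
qed auto

lemma sum_pm_one_mod4:
  assumes "finite S" "\<And>x. x \<in> S \<Longrightarrow> s x \<in> {1,-1::int}"
  shows "4 dvd sum s S - (int (card S) + 1 - prod s S)"
  using assms
proof (induction S rule: finite_induct)
  case (insert x F)
  have "s x \<in> {1,-1}" "prod s F \<in> {1,-1}"
    using insert(4) prod_pm_one[of F s] by auto
  then have "4 dvd (s x - 1) * (1 + prod s F)"
    by auto
  moreover have "sum s (insert x F) - (int (card (insert x F)) + 1 - prod s (insert x F))
      = (sum s F - (int (card F) + 1 - prod s F)) + (s x - 1) * (1 + prod s F)"
    using insert(1,2) by (simp add: algebra_simps)
  ultimately show ?case
    using insert.IH insert.prems by (metis dvd_add insertCI)
qed simp

section \<open>Cocycles with values \<open>\<pm>1\<close>\<close>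

definition coboundary_of :: "('a, 'b) monoid_scheme \<Rightarrow> ('a \<Rightarrow> int) \<Rightarrow> 'a \<Rightarrow> 'a \<Rightarrow> int" where
  "coboundary_of G \<phi> g h = \<phi> g * \<phi> h * \<phi> (g \<otimes>\<^bsub>G\<^esub> h)"

lemma coboundary_iff_coboundary_of:
  "coboundary G \<psi> \<longleftrightarrow> (\<exists>\<phi>. (\<forall>g\<in>carrier G. \<phi> g \<in> {1,-1}) \<and>
     (\<forall>g\<in>carrier G. \<forall>h\<in>carrier G. \<psi> g h = coboundary_of G \<phi> g h))"
  by (simp add: coboundary_def coboundary_of_def)

lemma coboundary_of_pm_one:
  "monoid G \<Longrightarrow> (\<forall>x\<in>carrier G. \<phi> x \<in> {1,-1}) \<Longrightarrow> g \<in> carrier G \<Longrightarrow> h \<in> carrier G \<Longrightarrow>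
   coboundary_of G \<phi> g h \<in> {1,-1}"
  unfolding coboundary_of_def by (intro pm_one_mult) (auto simp: monoid.m_closed)

lemma coboundary_of_mult:
  "coboundary_of G \<phi> g h * coboundary_of G \<theta> g h = coboundary_of G (\<lambda>x. \<phi> x * \<theta> x) g h"
  by (simp add: coboundary_of_def ac_simps)

lemma coboundary_of_const: "(c::int) \<in> {1,-1} \<Longrightarrow> coboundary_of G (\<lambda>_. c) g h = c"
  by (auto simp: coboundary_of_def)

lemma coboundary_of_commute:
  "comm_monoid G \<Longrightarrow> g \<in> carrier G \<Longrightarrow> h \<in> carrier G \<Longrightarrow> coboundary_of G \<phi> h g = coboundary_of G \<phi> g h"
  by (simp add: coboundary_of_def comm_monoid.m_comm ac_simps)

lemma cocycleD:
  "cocycle G \<psi> \<Longrightarrow> g \<in> carrier G \<Longrightarrow> h \<in> carrier G \<Longrightarrow> k \<in> carrier G \<Longrightarrow>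
   \<psi> g h * \<psi> (g \<otimes>\<^bsub>G\<^esub> h) k = \<psi> g (h \<otimes>\<^bsub>G\<^esub> k) * \<psi> h k"
  unfolding cocycle_def by blast

lemma cocycle_values: "cocycle G \<psi> \<Longrightarrow> g \<in> carrier G \<Longrightarrow> h \<in> carrier G \<Longrightarrow> \<psi> g h \<in> {1,-1}"
  unfolding cocycle_def by blast

lemma cocycle_mult:
  assumes "cocycle G \<psi>" "cocycle G \<chi>"
  shows "cocycle G (\<lambda>g h. \<psi> g h * \<chi> g h)"
  unfolding cocycle_def
proof (intro conjI ballI)
  fix g h k assume "g \<in> carrier G" "h \<in> carrier G" "k \<in> carrier G"
  from cocycleD[OF assms(1) this] cocycleD[OF assms(2) this]
  show "\<psi> g h * \<chi> g h * (\<psi> (g \<otimes>\<^bsub>G\<^esub> h) k * \<chi> (g \<otimes>\<^bsub>G\<^esub> h) k) =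
        \<psi> g (h \<otimes>\<^bsub>G\<^esub> k) * \<chi> g (h \<otimes>\<^bsub>G\<^esub> k) * (\<psi> h k * \<chi> h k)"
    by (metis mult.assoc mult.left_commute)
next
  fix g h assume "g \<in> carrier G" "h \<in> carrier G"
  then show "\<psi> g h * \<chi> g h \<in> {1,-1}"
    by (intro pm_one_mult cocycle_values[OF assms(1)] cocycle_values[OF assms(2)])
qed

lemma cocycle_coboundary_of:
  assumes "monoid G" "\<forall>x\<in>carrier G. \<phi> x \<in> {1,-1}"
  shows "cocycle G (coboundary_of G \<phi>)"
  unfolding cocycle_def
proof (intro conjI ballI)
  fix g h k assume ghk: "g \<in> carrier G" "h \<in> carrier G" "k \<in> carrier G"
  have sq: "\<phi> (g \<otimes>\<^bsub>G\<^esub> h) * \<phi> (g \<otimes>\<^bsub>G\<^esub> h) = 1" "\<phi> (h \<otimes>\<^bsub>G\<^esub> k) * \<phi> (h \<otimes>\<^bsub>G\<^esub> k) = 1"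
    using assms ghk by (auto intro!: pm_one_square simp: monoid.m_closed)
  have "coboundary_of G \<phi> g h * coboundary_of G \<phi> (g \<otimes>\<^bsub>G\<^esub> h) k
      = \<phi> g * \<phi> h * \<phi> k * \<phi> (g \<otimes>\<^bsub>G\<^esub> h \<otimes>\<^bsub>G\<^esub> k) * (\<phi> (g \<otimes>\<^bsub>G\<^esub> h) * \<phi> (g \<otimes>\<^bsub>G\<^esub> h))"
    by (simp add: coboundary_of_def ac_simps)
  also have "\<dots> = \<phi> g * \<phi> h * \<phi> k * \<phi> (g \<otimes>\<^bsub>G\<^esub> (h \<otimes>\<^bsub>G\<^esub> k)) * (\<phi> (h \<otimes>\<^bsub>G\<^esub> k) * \<phi> (h \<otimes>\<^bsub>G\<^esub> k))"
    using sq ghk by (simp add: monoid.m_assoc[OF assms(1)])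
  also have "\<dots> = coboundary_of G \<phi> g (h \<otimes>\<^bsub>G\<^esub> k) * coboundary_of G \<phi> h k"
    by (simp add: coboundary_of_def ac_simps)
  finally show "coboundary_of G \<phi> g h * coboundary_of G \<phi> (g \<otimes>\<^bsub>G\<^esub> h) k =
                coboundary_of G \<phi> g (h \<otimes>\<^bsub>G\<^esub> k) * coboundary_of G \<phi> h k" .
qed (use assms in \<open>rule coboundary_of_pm_one\<close>)

lemma cocycle_transpose:
  assumes "comm_monoid G" "cocycle G \<psi>"
  shows "cocycle G (\<lambda>g h. \<psi> h g)"
  unfolding cocycle_def
proof (intro conjI ballI)
  fix g h k assume ghk: "g \<in> carrier G" "h \<in> carrier G" "k \<in> carrier G"
  show "\<psi> h g * \<psi> k (g \<otimes>\<^bsub>G\<^esub> h) = \<psi> (h \<otimes>\<^bsub>G\<^esub> k) g * \<psi> k h"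
    using cocycleD[OF assms(2) ghk(3,2,1)] ghk
    by (simp add: comm_monoid.m_comm[OF assms(1)] mult.commute)
qed (rule cocycle_values[OF assms(2)])

lemma cocycle_unit_left_right:
  assumes "monoid G" "cocycle G \<psi>" "g \<in> carrier G" "k \<in> carrier G"
  shows "\<psi> g \<one>\<^bsub>G\<^esub> = \<psi> \<one>\<^bsub>G\<^esub> k"
proof -
  have "\<psi> g \<one>\<^bsub>G\<^esub> * \<psi> g k = \<psi> g k * \<psi> \<one>\<^bsub>G\<^esub> k"
    using cocycleD[OF assms(2) assms(3) monoid.one_closed[OF assms(1)] assms(4)] assms by simp
  moreover have "\<psi> g k \<noteq> 0"
    using cocycle_values[OF assms(2-4)] by auto
  ultimately show ?thesis by simp
qed

lemma row_excess_cong: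
  "(\<And>g h. g \<in> carrier G \<Longrightarrow> h \<in> carrier G \<Longrightarrow> \<psi> g h = \<chi> g h) \<Longrightarrow> row_excess G \<psi> = row_excess G \<chi>"
  unfolding row_excess_def by (intro sum.cong refl arg_cong[where f = abs]) auto

section \<open>Cohomology of \<open>\<int>\<^sub>2 \<times> \<int>\<^sub>m\<close> for odd \<open>m\<close>\<close>

abbreviation Z2xZm :: "nat \<Rightarrow> (int \<times> int) monoid" where
  "Z2xZm m \<equiv> integer_mod_group 2 \<times>\<times> integer_mod_group m"

lemma carrier_Z2xZm: "m > 0 \<Longrightarrow> carrier (Z2xZm m) = {0,1} \<times> {0..<int m}"
  by (auto simp: carrier_integer_mod_group)

lemma fst_in_carrier_Z2xZm: "g \<in> carrier (Z2xZm m) \<Longrightarrow> fst g \<in> {0,1}"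
  by (auto simp: carrier_integer_mod_group)

lemma pair_in_carrier_Z2xZm: "u \<in> {0,1} \<Longrightarrow> y \<in> {0..<int m} \<Longrightarrow> (u, y) \<in> carrier (Z2xZm m)"
  by (auto simp: carrier_integer_mod_group)

lemma mult_Z2xZm: "g \<otimes>\<^bsub>Z2xZm m\<^esub> h = ((fst g + fst h) mod 2, (snd g + snd h) mod int m)"
  by (simp add: mult_DirProd')

lemma comm_group_Z2xZm: "comm_group (Z2xZm m)"
  by (intro group.group_comm_groupI DirProd_group group_integer_mod_group)
    (auto simp: mult_Z2xZm ac_simps)

lemma monoid_Z2xZm: "monoid (Z2xZm m)"
  and comm_monoid_Z2xZm: "comm_monoid (Z2xZm m)"
  using comm_group_Z2xZm by (auto simp: comm_group_def comm_monoid_def)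

lemma prod_shift_mod:
  assumes "m > 0"
  shows "(\<Prod>y\<in>{0..<int m}. F ((c + y) mod int m)) = (\<Prod>y\<in>{0..<int m}. F y)"
proof -
  have "bij_betw (\<lambda>y. (c + y) mod int m) {0..<int m} {0..<int m}"
    by (rule bij_betw_byWitness[where f' = "\<lambda>y. (y - c) mod int m"])
      (use assms in \<open>auto simp: mod_diff_left_eq mod_add_right_eq\<close>)
  then show ?thesis
    by (rule prod.reindex_bij_betw)
qed

text \<open>Multiply the cocycle identities for \<open>(g, h, (0, y))\<close> over all \<open>y\<close>; as \<open>m\<close> is odd, the factor
  \<open>\<psi> g h ^ m\<close> collapses to \<open>\<psi> g h\<close>.\<close>
lemma cocycle_Z2xZm_right_average:
  assumes "odd m" "cocycle (Z2xZm m) \<psi>" "g \<in> carrier (Z2xZm m)" "h \<in> carrier (Z2xZm m)"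
  shows "\<psi> g h * coboundary_of (Z2xZm m) (\<lambda>x. \<Prod>y\<in>{0..<int m}. \<psi> x (0, y)) g h
       = (\<Prod>y\<in>{0..<int m}. \<psi> g (0, y)) * (\<Prod>y\<in>{0..<int m}. \<psi> g (fst h, y))"
proof -
  let ?G = "Z2xZm m" and ?Y = "{0..<int m}"
  define A where "A x = (\<Prod>y\<in>?Y. \<psi> x (0, y))" for x
  define P where "P = (\<Prod>y\<in>?Y. \<psi> g (fst h, y))"
  have m: "m > 0"
    using assms(1) by (rule odd_pos)
  have fst_h: "fst h \<in> {0,1}"
    using assms(4) by (rule fst_in_carrier_Z2xZm)
  have "\<psi> g h * \<psi> (g \<otimes>\<^bsub>?G\<^esub> h) (0, y) = \<psi> g (fst h, (snd h + y) mod int m) * \<psi> h (0, y)"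
    if "y \<in> ?Y" for y
    using cocycleD[OF assms(2-4) pair_in_carrier_Z2xZm[OF _ that]] fst_h
    by (auto simp: mult_Z2xZm)
  then have "(\<Prod>y\<in>?Y. \<psi> g h * \<psi> (g \<otimes>\<^bsub>?G\<^esub> h) (0, y))
      = (\<Prod>y\<in>?Y. \<psi> g (fst h, (snd h + y) mod int m) * \<psi> h (0, y))"
    by (rule prod.cong[OF refl])
  then have "\<psi> g h ^ m * A (g \<otimes>\<^bsub>?G\<^esub> h) = P * A h"
    by (simp add: prod.distrib A_def P_def prod_shift_mod[OF m, of "\<lambda>y. \<psi> g (fst h, y)"])
  moreover have "\<psi> g h ^ m = \<psi> g h"
    using cocycle_values[OF assms(2-4)] assms(1) by (rule pm_one_power_odd)
  moreover have "A h * A h = 1"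
    unfolding A_def
    by (intro pm_one_square prod_pm_one cocycle_values[OF assms(2,4)] pair_in_carrier_Z2xZm) auto
  ultimately have "\<psi> g h * (A g * A h * A (g \<otimes>\<^bsub>?G\<^esub> h)) = A g * P * (A h * A h)"
    by (simp add: ac_simps)
  also have "\<dots> = A g * P"
    using \<open>A h * A h = 1\<close> by simp
  finally show ?thesis
    by (simp add: coboundary_of_def A_def P_def)
qed

lemma cocycle_Z2xZm_left_average:
  assumes "odd m" "cocycle (Z2xZm m) \<psi>" "g \<in> carrier (Z2xZm m)" "h \<in> carrier (Z2xZm m)"
  shows "\<psi> g h * coboundary_of (Z2xZm m) (\<lambda>x. \<Prod>y\<in>{0..<int m}. \<psi> (0, y) x) g h
       = (\<Prod>y\<in>{0..<int m}. \<psi> (0, y) h) * (\<Prod>y\<in>{0..<int m}. \<psi> (fst g, y) h)"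
  using cocycle_Z2xZm_right_average[OF assms(1) cocycle_transpose[OF comm_monoid_Z2xZm assms(2)] assms(4,3)]
    coboundary_of_commute[OF comm_monoid_Z2xZm assms(3,4)]
  by simp

lemma cocycle_Z2xZm_inflation:
  assumes "odd m" "cocycle (Z2xZm m) \<psi>"
  obtains A \<chi> where "\<forall>x\<in>carrier (Z2xZm m). A x \<in> {1,-1}"
    "\<And>g h. g \<in> carrier (Z2xZm m) \<Longrightarrow> h \<in> carrier (Z2xZm m) \<Longrightarrow>
       \<psi> g h * coboundary_of (Z2xZm m) A g h = \<chi> (fst g) (fst h)"
proof -
  let ?G = "Z2xZm m" and ?Y = "{0..<int m}"
  define A1 where "A1 x = (\<Prod>y\<in>?Y. \<psi> x (0, y))" for x
  define \<psi>1 where "\<psi>1 g h = \<psi> g h * coboundary_of ?G A1 g h" for g h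
  define A2 where "A2 x = (\<Prod>y\<in>?Y. \<psi>1 (0, y) x)" for x
  define \<chi> where "\<chi> u v = (\<Prod>y\<in>?Y. \<psi>1 (0, y) (v, 0)) * (\<Prod>y\<in>?Y. \<psi>1 (u, y) (v, 0))" for u v
  have m: "m > 0"
    using assms(1) by (rule odd_pos)
  have A1_pm: "\<forall>x\<in>carrier ?G. A1 x \<in> {1,-1}"
    unfolding A1_def
    by (intro ballI prod_pm_one cocycle_values[OF assms(2)] pair_in_carrier_Z2xZm) auto
  have cocycle1: "cocycle ?G \<psi>1"
    unfolding \<psi>1_def by (intro cocycle_mult assms(2) cocycle_coboundary_of monoid_Z2xZm A1_pm)
  have A2_pm: "\<forall>x\<in>carrier ?G. A2 x \<in> {1,-1}"
    unfolding A2_def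
    by (intro ballI prod_pm_one cocycle_values[OF cocycle1] pair_in_carrier_Z2xZm) auto
  have \<psi>1_coset: "\<psi>1 x h = \<psi>1 x (fst h, 0)" if "x \<in> carrier ?G" "h \<in> carrier ?G" for x h
  proof -
    have "(fst h, 0) \<in> carrier ?G"
      using fst_in_carrier_Z2xZm[OF that(2)] m by (intro pair_in_carrier_Z2xZm) auto
    then show ?thesis
      using cocycle_Z2xZm_right_average[OF assms that] cocycle_Z2xZm_right_average[OF assms that(1)]
      unfolding \<psi>1_def A1_def by simp
  qed
  show ?thesis
  proof (rule that)
    show "\<forall>x\<in>carrier ?G. A1 x * A2 x \<in> {1,-1}"
      by (intro ballI pm_one_mult A1_pm[rule_format] A2_pm[rule_format])
  next
    fix g h assume gh: "g \<in> carrier ?G" "h \<in> carrier ?G"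
    have "\<psi> g h * coboundary_of ?G (\<lambda>x. A1 x * A2 x) g h = \<psi>1 g h * coboundary_of ?G A2 g h"
      by (simp add: \<psi>1_def coboundary_of_mult[symmetric] ac_simps)
    also have "\<dots> = A2 h * (\<Prod>y\<in>?Y. \<psi>1 (fst g, y) h)"
      unfolding A2_def by (rule cocycle_Z2xZm_left_average[OF assms(1) cocycle1 gh])
    also have "\<dots> = \<chi> (fst g) (fst h)"
      unfolding A2_def \<chi>_def
      using \<psi>1_coset[OF pair_in_carrier_Z2xZm gh(2)] fst_in_carrier_Z2xZm[OF gh(1)]
      by (intro arg_cong2[where f = "(*)"] prod.cong) auto
    finally show "\<psi> g h * coboundary_of ?G (\<lambda>x. A1 x * A2 x) g h = \<chi> (fst g) (fst h)" .
  qed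
qed

text \<open>The inflation to \<open>\<int>\<^sub>2 \<times> \<int>\<^sub>m\<close> of the cocycle of \<open>\<int>\<^sub>2\<close> that is not a coboundary.\<close>
definition beta :: "int \<times> int \<Rightarrow> int \<times> int \<Rightarrow> int" where
  "beta g h = (if fst g = 1 \<and> fst h = 1 then -1 else 1)"

lemma cocycle_beta: "cocycle (Z2xZm m) beta"
  unfolding cocycle_def
proof (intro conjI ballI)
  fix g h k assume "g \<in> carrier (Z2xZm m)" "h \<in> carrier (Z2xZm m)" "k \<in> carrier (Z2xZm m)"
  then have "fst g \<in> {0,1}" "fst h \<in> {0,1}" "fst k \<in> {0,1}"
    by (simp_all only: fst_in_carrier_Z2xZm)
  then show "beta g h * beta (g \<otimes>\<^bsub>Z2xZm m\<^esub> h) k = beta g (h \<otimes>\<^bsub>Z2xZm m\<^esub> k) * beta h k"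
    by (auto simp: beta_def mult_Z2xZm)
qed (simp add: beta_def)

lemma beta_not_coboundary: "\<not> coboundary (Z2xZm m) beta"
proof
  assume "coboundary (Z2xZm m) beta"
  then obtain \<theta> where \<theta>: "\<forall>g\<in>carrier (Z2xZm m). \<theta> g \<in> {1,-1}"
    and eq: "\<forall>g\<in>carrier (Z2xZm m). \<forall>h\<in>carrier (Z2xZm m). beta g h = \<theta> g * \<theta> h * \<theta> (g \<otimes>\<^bsub>Z2xZm m\<^esub> h)"
    unfolding coboundary_def by blast
  have carrier: "(0, 0) \<in> carrier (Z2xZm m)" "(1, 0) \<in> carrier (Z2xZm m)"
    by simp_all
  have "\<theta> (0, 0) * \<theta> (0, 0) = 1" "\<theta> (1, 0) * \<theta> (1, 0) = 1"
    using \<theta>[rule_format, OF carrier(1)] \<theta>[rule_format, OF carrier(2)] by (metis pm_one_square)+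
  moreover have "1 = \<theta> (0, 0) * \<theta> (0, 0) * \<theta> (0, 0)" "-1 = \<theta> (1, 0) * \<theta> (1, 0) * \<theta> (0, 0)"
    using eq[rule_format, OF carrier(1) carrier(1)] eq[rule_format, OF carrier(2) carrier(2)]
    by (simp_all add: beta_def mult_Z2xZm)
  ultimately show False
    by simp
qed

lemma twisted_not_coboundary:
  assumes "\<forall>x\<in>carrier (Z2xZm m). \<Phi> x \<in> {1,-1}"
  shows "\<not> coboundary (Z2xZm m) (\<lambda>g h. beta g h * coboundary_of (Z2xZm m) \<Phi> g h)"
proof
  let ?G = "Z2xZm m"
  assume "coboundary ?G (\<lambda>g h. beta g h * coboundary_of ?G \<Phi> g h)"
  then obtain \<theta> where \<theta>: "\<forall>g\<in>carrier ?G. \<theta> g \<in> {1,-1}"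
    and eq: "\<forall>g\<in>carrier ?G. \<forall>h\<in>carrier ?G. beta g h * coboundary_of ?G \<Phi> g h = coboundary_of ?G \<theta> g h"
    unfolding coboundary_iff_coboundary_of by (elim exE conjE) (rule that)
  have "beta g h = coboundary_of ?G (\<lambda>x. \<theta> x * \<Phi> x) g h" if "g \<in> carrier ?G" "h \<in> carrier ?G" for g h
  proof -
    have "coboundary_of ?G \<Phi> g h * coboundary_of ?G \<Phi> g h = 1"
      by (intro pm_one_square coboundary_of_pm_one monoid_Z2xZm assms that)
    then have "beta g h = beta g h * coboundary_of ?G \<Phi> g h * coboundary_of ?G \<Phi> g h"
      by (simp add: mult.assoc)
    also have "\<dots> = coboundary_of ?G \<theta> g h * coboundary_of ?G \<Phi> g h"
      using eq[rule_format, OF that] by simp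
    also have "\<dots> = coboundary_of ?G (\<lambda>x. \<theta> x * \<Phi> x) g h"
      by (rule coboundary_of_mult)
    finally show ?thesis .
  qed
  moreover have "\<forall>x\<in>carrier ?G. \<theta> x * \<Phi> x \<in> {1,-1}"
    by (intro ballI pm_one_mult \<theta>[rule_format] assms[rule_format])
  ultimately have "coboundary ?G beta"
    unfolding coboundary_iff_coboundary_of by (intro exI[of _ "\<lambda>x. \<theta> x * \<Phi> x"]) simp
  then show False
    using beta_not_coboundary by blast
qed

lemma inflated_cocycle_Z2xZm_cases:
  assumes "cocycle (Z2xZm m) \<psi>"
    and \<chi>: "\<And>g h. g \<in> carrier (Z2xZm m) \<Longrightarrow> h \<in> carrier (Z2xZm m) \<Longrightarrow> \<psi> g h = \<chi> (fst g) (fst h)"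
  obtains c where "c \<in> {1,-1}"
    "(\<forall>g\<in>carrier (Z2xZm m). \<forall>h\<in>carrier (Z2xZm m). \<psi> g h = c) \<or>
     (\<forall>g\<in>carrier (Z2xZm m). \<forall>h\<in>carrier (Z2xZm m). \<psi> g h = beta g h * c)"
proof -
  let ?G = "Z2xZm m"
  define c where "c = \<chi> 0 0"
  have carrier: "(0, 0) \<in> carrier ?G" "(1, 0) \<in> carrier ?G"
    by simp_all
  have \<chi>_pm: "\<chi> 0 0 \<in> {1,-1}" "\<chi> 1 1 \<in> {1,-1}"
    using cocycle_values[OF assms(1) carrier(1,1)] cocycle_values[OF assms(1) carrier(2,2)]
    by (simp_all add: \<chi>)
  have \<chi>_unit: "\<chi> u 0 = \<chi> 0 v" if "u \<in> {0,1}" "v \<in> {0,1}" for u v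
  proof -
    have uv: "(u, 0) \<in> carrier ?G" "(v, 0) \<in> carrier ?G"
      using that by (auto simp: carrier_integer_mod_group)
    from cocycle_unit_left_right[OF monoid_Z2xZm assms(1) uv]
    show ?thesis
      using \<chi>[OF uv(1) carrier(1)] \<chi>[OF carrier(1) uv(2)] by simp
  qed
  have \<chi>_c: "\<chi> 0 0 = c" "\<chi> 0 1 = c" "\<chi> 1 0 = c"
    using \<chi>_unit[of 0 1] \<chi>_unit[of 1 0] unfolding c_def by simp_all
  have c: "c \<in> {1,-1}"
    using \<chi>_pm(1) c_def by simp
  have \<psi>_form: "\<psi> g h = (if fst g = 1 \<and> fst h = 1 then \<chi> 1 1 else c)"
    if "g \<in> carrier ?G" "h \<in> carrier ?G" for g h
    using \<chi>[OF that] fst_in_carrier_Z2xZm[OF that(1)] fst_in_carrier_Z2xZm[OF that(2)] \<chi>_c by auto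
  have "\<chi> 1 1 = c \<or> \<chi> 1 1 = - c"
    using \<chi>_pm(2) c by auto
  then show ?thesis
  proof
    assume "\<chi> 1 1 = c"
    then have "\<forall>g\<in>carrier ?G. \<forall>h\<in>carrier ?G. \<psi> g h = c"
      by (simp add: \<psi>_form)
    with c that show ?thesis by blast
  next
    assume "\<chi> 1 1 = - c"
    then have "\<forall>g\<in>carrier ?G. \<forall>h\<in>carrier ?G. \<psi> g h = beta g h * c"
      by (simp add: \<psi>_form beta_def)
    with c that show ?thesis by blast
  qed
qed

lemma non_coboundary_cocycle_Z2xZm:
  assumes "odd m" "cocycle (Z2xZm m) \<psi>" "\<not> coboundary (Z2xZm m) \<psi>"
  obtains \<Phi> where "\<forall>x\<in>carrier (Z2xZm m). \<Phi> x \<in> {1,-1}"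
    "\<And>g h. g \<in> carrier (Z2xZm m) \<Longrightarrow> h \<in> carrier (Z2xZm m) \<Longrightarrow>
       \<psi> g h = beta g h * coboundary_of (Z2xZm m) \<Phi> g h"
proof -
  let ?G = "Z2xZm m"
  obtain A \<chi> where A: "\<forall>x\<in>carrier ?G. A x \<in> {1,-1}"
    and \<chi>: "\<And>g h. g \<in> carrier ?G \<Longrightarrow> h \<in> carrier ?G \<Longrightarrow> \<psi> g h * coboundary_of ?G A g h = \<chi> (fst g) (fst h)"
    using cocycle_Z2xZm_inflation[OF assms(1,2)] by metis
  have "cocycle ?G (\<lambda>g h. \<psi> g h * coboundary_of ?G A g h)"
    by (intro cocycle_mult assms(2) cocycle_coboundary_of monoid_Z2xZm A)
  then obtain c where c: "c \<in> {1,-1}" and cases: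
    "(\<forall>g\<in>carrier ?G. \<forall>h\<in>carrier ?G. \<psi> g h * coboundary_of ?G A g h = c) \<or>
     (\<forall>g\<in>carrier ?G. \<forall>h\<in>carrier ?G. \<psi> g h * coboundary_of ?G A g h = beta g h * c)"
    by (rule inflated_cocycle_Z2xZm_cases[where \<psi> = "\<lambda>g h. \<psi> g h * coboundary_of ?G A g h" and \<chi> = \<chi>, OF _ \<chi>])
  define \<Phi> where "\<Phi> = (\<lambda>x. c * A x)"
  have \<Phi>: "\<forall>x\<in>carrier ?G. \<Phi> x \<in> {1,-1}"
    unfolding \<Phi>_def by (intro ballI pm_one_mult c A[rule_format])
  have \<psi>_eq: "\<psi> g h = (\<psi> g h * coboundary_of ?G A g h) * coboundary_of ?G A g h"
    if "g \<in> carrier ?G" "h \<in> carrier ?G" for g h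
    using pm_one_square[OF coboundary_of_pm_one[OF monoid_Z2xZm A that]] by (simp add: mult.assoc)
  have coboundary_\<Phi>: "coboundary_of ?G \<Phi> g h = c * coboundary_of ?G A g h" for g h
    using coboundary_of_mult[where G = ?G and \<phi> = "\<lambda>_. c" and \<theta> = A]
    unfolding \<Phi>_def coboundary_of_const[OF c] by simp
  from cases have twisted: "\<forall>g\<in>carrier ?G. \<forall>h\<in>carrier ?G. \<psi> g h * coboundary_of ?G A g h = beta g h * c"
  proof
    assume const: "\<forall>g\<in>carrier ?G. \<forall>h\<in>carrier ?G. \<psi> g h * coboundary_of ?G A g h = c"
    have "\<forall>g\<in>carrier ?G. \<forall>h\<in>carrier ?G. \<psi> g h = coboundary_of ?G \<Phi> g h"
    proof (intro ballI)
      fix g h assume gh: "g \<in> carrier ?G" "h \<in> carrier ?G"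
      have "\<psi> g h = (\<psi> g h * coboundary_of ?G A g h) * coboundary_of ?G A g h"
        by (rule \<psi>_eq[OF gh])
      also have "\<dots> = coboundary_of ?G \<Phi> g h"
        using const[rule_format, OF gh] by (simp add: coboundary_\<Phi>)
      finally show "\<psi> g h = coboundary_of ?G \<Phi> g h" .
    qed
    with \<Phi> have "coboundary ?G \<psi>"
      unfolding coboundary_iff_coboundary_of by (intro exI[of _ \<Phi>]) simp
    with assms(3) show ?thesis
      by contradiction
  qed
  show ?thesis
  proof (rule that[OF \<Phi>])
    fix g h assume gh: "g \<in> carrier ?G" "h \<in> carrier ?G"
    have "\<psi> g h = (\<psi> g h * coboundary_of ?G A g h) * coboundary_of ?G A g h"
      by (rule \<psi>_eq[OF gh])
    also have "\<dots> = beta g h * coboundary_of ?G \<Phi> g h"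
      using twisted[rule_format, OF gh] by (simp add: coboundary_\<Phi> mult.assoc)
    finally show "\<psi> g h = beta g h * coboundary_of ?G \<Phi> g h" .
  qed
qed

section \<open>Periodic correlations and quaternary sequences\<close>

lemma bij_betw_add_mod:
  assumes "(m::nat) > 0"
  shows "bij_betw (\<lambda>k. (k + w) mod m) {..<m} {..<m}"
proof -
  have inj: "inj_on (\<lambda>k. (k + w) mod m) {..<m}"
  proof (rule inj_onI)
    fix x y :: nat assume xy: "x \<in> {..<m}" "y \<in> {..<m}" "(x + w) mod m = (y + w) mod m"
    then have "(int x + int w) mod int m = (int y + int w) mod int m"
      by (metis of_nat_add zmod_int)
    then have "((int x + int w) mod int m - int w) mod int m = ((int y + int w) mod int m - int w) mod int m"
      by simp
    then have "int x mod int m = int y mod int m"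
      by (simp add: mod_diff_left_eq)
    then show "x = y"
      using xy by simp
  qed
  moreover have "(\<lambda>k. (k + w) mod m) ` {..<m} \<subseteq> {..<m}"
    using assms by auto
  ultimately show ?thesis
    by (simp add: bij_betw_def endo_inj_surj)
qed

definition pcorr :: "nat \<Rightarrow> (nat \<Rightarrow> int) \<Rightarrow> (nat \<Rightarrow> int) \<Rightarrow> nat \<Rightarrow> int" where
  "pcorr m a b w = (\<Sum>k<m. a k * b ((k + w) mod m))"

definition corr_sum :: "nat \<Rightarrow> (nat \<Rightarrow> int) \<Rightarrow> (nat \<Rightarrow> int) \<Rightarrow> nat \<Rightarrow> int" where
  "corr_sum m a b w = pcorr m a a w + pcorr m b b w"

definition corr_diff :: "nat \<Rightarrow> (nat \<Rightarrow> int) \<Rightarrow> (nat \<Rightarrow> int) \<Rightarrow> nat \<Rightarrow> int" where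
  "corr_diff m a b w = pcorr m b a w - pcorr m a b w"

lemma pcorr_self_mod4:
  assumes "m > 0" "\<forall>k<m. a k \<in> {1,-1}"
  shows "4 dvd pcorr m a a w - int m"
proof -
  have "(\<Prod>k<m. a ((k + w) mod m)) = (\<Prod>k<m. a k)"
    using prod.reindex_bij_betw[OF bij_betw_add_mod[OF assms(1)]] by simp
  then have "(\<Prod>k<m. a k * a ((k + w) mod m)) = (\<Prod>k<m. a k) * (\<Prod>k<m. a k)"
    by (simp add: prod.distrib)
  also have "\<dots> = 1"
    using assms(2) by (intro pm_one_square prod_pm_one) auto
  finally have "(\<Prod>k<m. a k * a ((k + w) mod m)) = 1" .
  moreover have "4 dvd (\<Sum>k<m. a k * a ((k + w) mod m)) - (int (card {..<m}) + 1 - (\<Prod>k<m. a k * a ((k + w) mod m)))"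
    using assms by (intro sum_pm_one_mod4 pm_one_mult) auto
  ultimately show ?thesis
    by (simp add: pcorr_def)
qed

lemma abs_corr_sum_ge_2:
  assumes "odd m" "\<forall>k<m. a k \<in> {1,-1}" "\<forall>k<m. b k \<in> {1,-1}"
  shows "\<bar>corr_sum m a b w\<bar> \<ge> 2"
proof -
  have "4 dvd pcorr m a a w - int m" "4 dvd pcorr m b b w - int m"
    using pcorr_self_mod4 odd_pos[OF assms(1)] assms(2,3) by blast+
  with assms(1) show ?thesis
    unfolding corr_sum_def by (auto simp add: abs_if elim!: oddE) presburger+
qed

lemma pcorr_scale: "pcorr m (\<lambda>k. c * a k) (\<lambda>k. c * b k) w = c * c * pcorr m a b w"
  by (simp add: pcorr_def sum_distrib_left ac_simps)

lemma corr_sum_scale: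
  "c * c = 1 \<Longrightarrow> corr_sum m (\<lambda>k. c * a k) (\<lambda>k. c * b k) w = corr_sum m a b w"
  by (simp add: corr_sum_def pcorr_scale)

lemma corr_diff_scale:
  "c * c = 1 \<Longrightarrow> corr_diff m (\<lambda>k. c * a k) (\<lambda>k. c * b k) w = corr_diff m a b w"
  by (simp add: corr_diff_def pcorr_scale)

lemma corr_diff_0: "corr_diff m a b 0 = 0"
  by (simp add: corr_diff_def pcorr_def mult.commute)

lemma square_sum_eq_4_iff:
  assumes "\<bar>s\<bar> \<ge> 2"
  shows "s\<^sup>2 + d\<^sup>2 = (4::int) \<longleftrightarrow> \<bar>s\<bar> = 2 \<and> d = 0"
proof
  assume eq: "s\<^sup>2 + d\<^sup>2 = 4"
  have "2 * \<bar>s\<bar> \<le> \<bar>s\<bar> * \<bar>s\<bar>"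
    using assms by (intro mult_right_mono) auto
  moreover have "s\<^sup>2 = \<bar>s\<bar> * \<bar>s\<bar>" "d\<^sup>2 \<ge> 0"
    by (simp_all add: power2_eq_square abs_mult_self_eq)
  ultimately have "\<bar>s\<bar> \<le> 2" "d\<^sup>2 = 0"
    using eq assms by linarith+
  then show "\<bar>s\<bar> = 2 \<and> d = 0"
    using assms by simp
next
  assume "\<bar>s\<bar> = 2 \<and> d = 0"
  moreover have "s\<^sup>2 = \<bar>s\<bar>\<^sup>2"
    by simp
  ultimately show "s\<^sup>2 + d\<^sup>2 = 4"
    by simp
qed

lemma correlation_excess_eq_iff:
  assumes "odd m" "\<forall>k<m. a k \<in> {1,-1}" "\<forall>k<m. b k \<in> {1,-1}"
  shows "(\<Sum>w\<in>{1..<m}. \<bar>corr_sum m a b w\<bar>) + (\<Sum>w<m. \<bar>corr_diff m a b w\<bar>) = 2 * (int m - 1)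
    \<longleftrightarrow> (\<forall>w\<in>{1..<m}. (corr_sum m a b w)\<^sup>2 + (corr_diff m a b w)\<^sup>2 = 4)"
    (is "?excess \<longleftrightarrow> ?minimal")
proof -
  have ge2: "\<bar>corr_sum m a b w\<bar> \<ge> 2" for w
    using abs_corr_sum_ge_2[OF assms] .
  have m: "m > 0"
    using assms(1) by (rule odd_pos)
  have two: "(\<Sum>w\<in>{1..<m}. 2::int) = 2 * (int m - 1)"
    using m by simp
  have "(\<Sum>w\<in>{1..<m}. \<bar>corr_sum m a b w\<bar> - 2) + (\<Sum>w<m. \<bar>corr_diff m a b w\<bar>)
      = (\<Sum>w\<in>{1..<m}. \<bar>corr_sum m a b w\<bar>) + (\<Sum>w<m. \<bar>corr_diff m a b w\<bar>) - 2 * (int m - 1)"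
    unfolding sum_subtractf two by simp
  then have "?excess \<longleftrightarrow> (\<Sum>w\<in>{1..<m}. \<bar>corr_sum m a b w\<bar> - 2) + (\<Sum>w<m. \<bar>corr_diff m a b w\<bar>) = 0"
    by linarith
  also have "\<dots> \<longleftrightarrow> (\<forall>w\<in>{1..<m}. \<bar>corr_sum m a b w\<bar> = 2) \<and> (\<forall>w\<in>{..<m}. corr_diff m a b w = 0)"
    using ge2 by (simp add: add_nonneg_eq_0_iff sum_nonneg sum_nonneg_eq_0_iff)
  also have "\<dots> \<longleftrightarrow> (\<forall>w\<in>{1..<m}. \<bar>corr_sum m a b w\<bar> = 2 \<and> corr_diff m a b w = 0)"
    using corr_diff_0[of m a b] by (metis atLeastLessThan_iff lessThan_iff less_one not_less)
  also have "\<dots> \<longleftrightarrow> ?minimal"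
    using square_sum_eq_4_iff[OF ge2] by simp
  finally show ?thesis .
qed

text \<open>The pair of \<open>\<pm>1\<close> sequences \<open>(a, b)\<close> corresponds to the quaternary sequence with
  \<open>(1, 1) \<mapsto> 1\<close>, \<open>(-1, -1) \<mapsto> -1\<close>, \<open>(-1, 1) \<mapsto> \<i>\<close> and \<open>(1, -1) \<mapsto> -\<i>\<close>.\<close>
definition quaternary_of :: "(nat \<Rightarrow> int) \<Rightarrow> (nat \<Rightarrow> int) \<Rightarrow> nat \<Rightarrow> complex" where
  "quaternary_of a b k = (of_int (a k + b k) + \<i> * of_int (b k - a k)) / 2"

lemma quaternary_of_values:
  "a k \<in> {1,-1} \<Longrightarrow> b k \<in> {1,-1} \<Longrightarrow> quaternary_of a b k \<in> {1, -1, \<i>, -\<i>}"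
  unfolding quaternary_of_def by (auto simp: complex_eq_iff)

lemma quaternary_sequence_decomposition:
  assumes "\<forall>k<m. f k \<in> {1, -1, \<i>, -\<i>}"
  obtains a b where "\<forall>k. a k \<in> {1,-1}" "\<forall>k. b k \<in> {1,-1}" "\<forall>k<m. f k = quaternary_of a b k"
proof
  show "\<forall>k<m. f k = quaternary_of (\<lambda>k. if f k \<in> {1, -\<i>} then 1 else -1) (\<lambda>k. if f k \<in> {1, \<i>} then 1 else -1) k"
    using assms by (auto simp: quaternary_of_def complex_eq_iff)
qed auto

lemma autocorr_quaternary_of:
  assumes "\<forall>k<m. f k = quaternary_of a b k"
  shows "autocorr m f w = (of_int (corr_sum m a b w) + \<i> * of_int (corr_diff m a b w)) / 2"
proof -
  have product: "quaternary_of a b k * cnj (quaternary_of a b j) =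
      (of_int (a k * a j + b k * b j) + \<i> * of_int (b k * a j - a k * b j)) / 2" for k j
    unfolding quaternary_of_def by (simp add: complex_eq_iff field_simps)
  have "autocorr m f w = (\<Sum>k<m. quaternary_of a b k * cnj (quaternary_of a b ((k + w) mod m)))"
    unfolding autocorr_def using assms by (intro sum.cong refl) auto
  also have "\<dots> = (of_int (corr_sum m a b w) + \<i> * of_int (corr_diff m a b w)) / 2"
    unfolding product corr_sum_def corr_diff_def pcorr_def
    by (simp add: sum_divide_distrib[symmetric] sum.distrib sum_distrib_left sum_subtractf right_diff_distrib)
  finally show ?thesis .
qed

lemma cmod_half_eq_1_iff: "cmod ((of_int s + \<i> * of_int d) / 2) = 1 \<longleftrightarrow> s\<^sup>2 + d\<^sup>2 = (4::int)"
proof -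
  let ?z = "(of_int s + \<i> * of_int d) / 2 :: complex"
  have "cmod ?z = 1 \<longleftrightarrow> (cmod ?z)\<^sup>2 = 1"
    using norm_ge_zero[of ?z] power2_eq_1_iff[of "cmod ?z"] by linarith
  also have "(cmod ?z)\<^sup>2 = (real_of_int s / 2)\<^sup>2 + (real_of_int d / 2)\<^sup>2"
    unfolding cmod_power2 by simp
  also have "\<dots> = 1 \<longleftrightarrow> real_of_int (s\<^sup>2 + d\<^sup>2) = 4"
    by (simp add: power_divide field_simps)
  also have "\<dots> \<longleftrightarrow> s\<^sup>2 + d\<^sup>2 = 4"
    by linarith
  finally show ?thesis .
qed

lemma OQS_quaternary_iff:
  assumes "odd m" "\<forall>k<m. a k \<in> {1,-1}" "\<forall>k<m. b k \<in> {1,-1}" "\<forall>k<m. f k = quaternary_of a b k"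
  shows "OQS m f \<longleftrightarrow> (\<forall>w\<in>{1..<m}. (corr_sum m a b w)\<^sup>2 + (corr_diff m a b w)\<^sup>2 = 4)"
proof -
  have "{1..m-1} = {1..<m}"
    using odd_pos[OF assms(1)] by auto
  moreover have "\<forall>k<m. f k \<in> {1, -1, \<i>, -\<i>}"
    using assms(2-4) quaternary_of_values by auto
  ultimately have "OQS m f \<longleftrightarrow> (\<forall>w\<in>{1..<m}. cmod (autocorr m f w) = 1)"
    using assms(1) by (simp add: OQS_def)
  then show ?thesis
    by (simp only: autocorr_quaternary_of[OF assms(4)] cmod_half_eq_1_iff)
qed

section \<open>Row excess of the twisted cocycles\<close>

definition phi_pair :: "(nat \<Rightarrow> int) \<Rightarrow> (nat \<Rightarrow> int) \<Rightarrow> int \<times> int \<Rightarrow> int" where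
  "phi_pair a b g = (if fst g = 0 then a (nat (snd g)) else b (nat (snd g)))"

definition twisted_cocycle :: "nat \<Rightarrow> (nat \<Rightarrow> int) \<Rightarrow> (nat \<Rightarrow> int) \<Rightarrow> int \<times> int \<Rightarrow> int \<times> int \<Rightarrow> int" where
  "twisted_cocycle m a b = (\<lambda>g h. beta g h * coboundary_of (Z2xZm m) (phi_pair a b) g h)"

lemma phi_pair_pm_one:
  assumes "m > 0" "\<forall>k<m. a k \<in> {1,-1}" "\<forall>k<m. b k \<in> {1,-1}"
  shows "\<forall>g\<in>carrier (Z2xZm m). phi_pair a b g \<in> {1,-1}"
proof
  fix g assume "g \<in> carrier (Z2xZm m)"
  then have "nat (snd g) < m"
    unfolding carrier_Z2xZm[OF assms(1)] by auto
  then show "phi_pair a b g \<in> {1,-1}"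
    using assms by (simp add: phi_pair_def)
qed

lemma sum_carrier_Z2xZm:
  assumes "m > 0"
  shows "(\<Sum>h\<in>carrier (Z2xZm m). F h) = (\<Sum>k<m. F (0, int k)) + (\<Sum>k<m. F (1, int k))"
proof -
  have "{0..<int m} = int ` {..<m}"
    by (simp add: image_int_atLeastLessThan lessThan_atLeast0)
  then have int_sum: "(\<Sum>y\<in>{0..<int m}. F (u, y)) = (\<Sum>k<m. F (u, int k))" for u
    by (simp add: sum.reindex)
  have "(\<Sum>h\<in>carrier (Z2xZm m). F h) = (\<Sum>u\<in>{0,1}. \<Sum>y\<in>{0..<int m}. F (u, y))"
    unfolding carrier_Z2xZm[OF assms] by (simp add: sum.cartesian_product)
  then show ?thesis
    by (simp add: int_sum)
qed

lemma nat_mod_int_add: "nat ((int x + int k) mod int m) = (x + k) mod m"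
  by (metis nat_int of_nat_add zmod_int)

lemma row_sum_twisted_cocycle_0:
  "m > 0 \<Longrightarrow> (\<Sum>h\<in>carrier (Z2xZm m). twisted_cocycle m a b (0, int x) h) = a x * corr_sum m a b x"
  unfolding sum_carrier_Z2xZm corr_sum_def pcorr_def
  by (simp add: twisted_cocycle_def nat_mod_int_add beta_def coboundary_of_def phi_pair_def
      sum_distrib_left sum.distrib[symmetric] algebra_simps add.commute[of x])

lemma row_sum_twisted_cocycle_1:
  "m > 0 \<Longrightarrow> (\<Sum>h\<in>carrier (Z2xZm m). twisted_cocycle m a b (1, int x) h) = - (b x * corr_diff m a b x)"
  unfolding sum_carrier_Z2xZm corr_diff_def pcorr_def
  by (simp add: twisted_cocycle_def nat_mod_int_add beta_def coboundary_of_def phi_pair_def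
      sum_distrib_left sum.distrib[symmetric] sum_subtractf[symmetric] sum_negf[symmetric]
      algebra_simps add.commute[of x])

lemma carrier_Z2xZm_minus_one:
  assumes "m > 0"
  shows "carrier (Z2xZm m) - {\<one>\<^bsub>Z2xZm m\<^esub>} = (\<lambda>x. (0, int x)) ` {1..<m} \<union> (\<lambda>x. (1, int x)) ` {..<m}"
proof -
  have "{0..<int m} = int ` {..<m}"
    by (simp add: image_int_atLeastLessThan lessThan_atLeast0)
  then show ?thesis
    unfolding carrier_Z2xZm[OF assms] by (auto simp: image_iff Suc_le_eq)
qed

lemma row_excess_twisted_cocycle:
  assumes "m > 0" "\<forall>k<m. a k \<in> {1,-1}" "\<forall>k<m. b k \<in> {1,-1}"
  shows "row_excess (Z2xZm m) (twisted_cocycle m a b)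
    = (\<Sum>w\<in>{1..<m}. \<bar>corr_sum m a b w\<bar>) + (\<Sum>w<m. \<bar>corr_diff m a b w\<bar>)"
proof -
  let ?r = "\<lambda>g. \<bar>\<Sum>h\<in>carrier (Z2xZm m). twisted_cocycle m a b g h\<bar>"
  have "row_excess (Z2xZm m) (twisted_cocycle m a b)
      = (\<Sum>g\<in>(\<lambda>x. (0, int x)) ` {1..<m}. ?r g) + (\<Sum>g\<in>(\<lambda>x. (1, int x)) ` {..<m}. ?r g)"
    unfolding row_excess_def carrier_Z2xZm_minus_one[OF assms(1)] by (rule sum.union_disjoint) auto
  also have "\<dots> = (\<Sum>x\<in>{1..<m}. ?r (0, int x)) + (\<Sum>x<m. ?r (1, int x))"
    by (simp add: sum.reindex inj_on_def)
  also have "\<dots> = (\<Sum>w\<in>{1..<m}. \<bar>corr_sum m a b w\<bar>) + (\<Sum>w<m. \<bar>corr_diff m a b w\<bar>)"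
    unfolding row_sum_twisted_cocycle_0[OF assms(1)] row_sum_twisted_cocycle_1[OF assms(1)]
    using assms(2,3) by (intro arg_cong2[where f = "(+)"] sum.cong refl) (auto simp: abs_mult)
  finally show ?thesis .
qed

lemma card_carrier_Z2xZm: "m > 0 \<Longrightarrow> card (carrier (Z2xZm m)) = 2 * m"
  by (simp only: carrier_Z2xZm card_cartesian_product) simp

lemma twisted_cocycle_quasi_orthogonal:
  assumes "odd m" "\<forall>k<m. a k \<in> {1,-1}" "\<forall>k<m. b k \<in> {1,-1}" "a 0 = 1"
    and "\<forall>w\<in>{1..<m}. (corr_sum m a b w)\<^sup>2 + (corr_diff m a b w)\<^sup>2 = 4"
  shows "normalized_cocycle (Z2xZm m) (twisted_cocycle m a b)"
    "quasi_orthogonal (Z2xZm m) (twisted_cocycle m a b)"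
    "\<not> coboundary (Z2xZm m) (twisted_cocycle m a b)"
proof -
  let ?G = "Z2xZm m" and ?\<psi> = "twisted_cocycle m a b"
  have m: "m > 0"
    using assms(1) by (rule odd_pos)
  have \<Phi>: "\<forall>g\<in>carrier ?G. phi_pair a b g \<in> {1,-1}"
    using phi_pair_pm_one[OF m assms(2,3)] .
  have "cocycle ?G ?\<psi>"
    unfolding twisted_cocycle_def by (intro cocycle_mult cocycle_beta cocycle_coboundary_of monoid_Z2xZm \<Phi>)
  then show normalized: "normalized_cocycle ?G ?\<psi>"
    using assms(4) by (simp add: normalized_cocycle_def twisted_cocycle_def beta_def coboundary_of_def phi_pair_def)
  show not_coboundary: "\<not> coboundary ?G ?\<psi>"
    unfolding twisted_cocycle_def by (rule twisted_not_coboundary[OF \<Phi>])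
  obtain t where t: "m = 2 * t + 1"
    using assms(1) oddE by blast
  have "row_excess ?G ?\<psi> = 4 * int t"
    using row_excess_twisted_cocycle[OF m assms(2,3)] correlation_excess_eq_iff[OF assms(1-3)] assms(5) t
    by simp
  moreover have "card (carrier ?G) = 4 * t + 2"
    using card_carrier_Z2xZm[OF m] t by simp
  ultimately show "quasi_orthogonal ?G ?\<psi>"
    unfolding quasi_orthogonal_def using normalized not_coboundary by blast
qed

lemma OQS_normalized_pair:
  assumes "odd m" "OQS m f"
  obtains a b where "\<forall>k<m. a k \<in> {1,-1}" "\<forall>k<m. b k \<in> {1,-1}" "a 0 = 1"
    "\<forall>w\<in>{1..<m}. (corr_sum m a b w)\<^sup>2 + (corr_diff m a b w)\<^sup>2 = 4"
proof -
  obtain a0 b0 where a0: "\<forall>k. a0 k \<in> {1,-1}" and b0: "\<forall>k. b0 k \<in> {1,-1}"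
    and f: "\<forall>k<m. f k = quaternary_of a0 b0 k"
    using quaternary_sequence_decomposition assms(2) unfolding OQS_def by metis
  have minimal: "\<forall>w\<in>{1..<m}. (corr_sum m a0 b0 w)\<^sup>2 + (corr_diff m a0 b0 w)\<^sup>2 = 4"
    using OQS_quaternary_iff[OF assms(1) _ _ f] a0 b0 assms(2) by blast
  define c where "c = a0 0"
  have c: "c * c = 1"
    unfolding c_def using a0 by (intro pm_one_square) blast
  show ?thesis
  proof (rule that[of "\<lambda>k. c * a0 k" "\<lambda>k. c * b0 k"])
    show "\<forall>k<m. c * a0 k \<in> {1,-1}" "\<forall>k<m. c * b0 k \<in> {1,-1}"
      unfolding c_def by (intro allI impI pm_one_mult a0[rule_format] b0[rule_format])+
    show "c * a0 0 = 1"
      using c by (simp add: c_def)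
    show "\<forall>w\<in>{1..<m}. (corr_sum m (\<lambda>k. c * a0 k) (\<lambda>k. c * b0 k) w)\<^sup>2 +
        (corr_diff m (\<lambda>k. c * a0 k) (\<lambda>k. c * b0 k) w)\<^sup>2 = 4"
      using minimal by (simp add: corr_sum_scale[OF c] corr_diff_scale[OF c])
  qed
qed

lemma OQS_if_quasi_orthogonal_non_coboundary:
  assumes "odd m" "cocycle (Z2xZm m) \<psi>" "quasi_orthogonal (Z2xZm m) \<psi>" "\<not> coboundary (Z2xZm m) \<psi>"
  shows "\<exists>f. OQS m f"
proof -
  let ?G = "Z2xZm m"
  have m: "m > 0"
    using assms(1) by (rule odd_pos)
  obtain \<Phi> where \<Phi>: "\<forall>x\<in>carrier ?G. \<Phi> x \<in> {1,-1}"
    and \<psi>: "\<And>g h. g \<in> carrier ?G \<Longrightarrow> h \<in> carrier ?G \<Longrightarrow> \<psi> g h = beta g h * coboundary_of ?G \<Phi> g h"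
    using non_coboundary_cocycle_Z2xZm[OF assms(1,2,4)] by metis
  define a where "a k = \<Phi> (0, int k)" for k
  define b where "b k = \<Phi> (1, int k)" for k
  have a: "\<forall>k<m. a k \<in> {1,-1}" and b: "\<forall>k<m. b k \<in> {1,-1}"
    unfolding a_def b_def by (intro allI impI \<Phi>[rule_format] pair_in_carrier_Z2xZm; simp)+
  have "\<Phi> g = phi_pair a b g" if "g \<in> carrier ?G" for g
    using that unfolding carrier_Z2xZm[OF m] by (auto simp: phi_pair_def a_def b_def)
  then have "\<psi> g h = twisted_cocycle m a b g h" if "g \<in> carrier ?G" "h \<in> carrier ?G" for g h
    using that \<psi> monoid.m_closed[OF monoid_Z2xZm]
    by (simp add: twisted_cocycle_def coboundary_of_def)
  then have "row_excess ?G \<psi> = (\<Sum>w\<in>{1..<m}. \<bar>corr_sum m a b w\<bar>) + (\<Sum>w<m. \<bar>corr_diff m a b w\<bar>)"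
    using row_excess_cong row_excess_twisted_cocycle[OF m a b] by metis
  moreover obtain t where "card (carrier ?G) = 4 * t + 2" "row_excess ?G \<psi> = 4 * int t"
    using assms(3,4) unfolding quasi_orthogonal_def by blast
  moreover have "card (carrier ?G) = 2 * m"
    by (rule card_carrier_Z2xZm[OF m])
  ultimately have "\<forall>w\<in>{1..<m}. (corr_sum m a b w)\<^sup>2 + (corr_diff m a b w)\<^sup>2 = 4"
    using correlation_excess_eq_iff[OF assms(1) a b] by simp
  then have "OQS m (quaternary_of a b)"
    using OQS_quaternary_iff[OF assms(1) a b] by simp
  then show ?thesis
    by blast
qed

theorem corollary4:
  fixes m :: nat
  assumes "odd m" and "m > 1"
  shows "(\<exists>f. OQS m f) \<longleftrightarrow>
    (\<exists>\<psi>. normalized_cocycle (integer_mod_group 2 \<times>\<times> integer_mod_group m) \<psi> \<and>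
         quasi_orthogonal (integer_mod_group 2 \<times>\<times> integer_mod_group m) \<psi> \<and>
         \<not> coboundary (integer_mod_group 2 \<times>\<times> integer_mod_group m) \<psi>)"
proof
  assume "\<exists>f. OQS m f"
  then obtain f where "OQS m f" ..
  then obtain a b where "\<forall>k<m. a k \<in> {1,-1}" "\<forall>k<m. b k \<in> {1,-1}" "a 0 = 1"
    "\<forall>w\<in>{1..<m}. (corr_sum m a b w)\<^sup>2 + (corr_diff m a b w)\<^sup>2 = 4"
    using OQS_normalized_pair[OF assms(1)] by metis
  from twisted_cocycle_quasi_orthogonal[OF assms(1) this]
  show "\<exists>\<psi>. normalized_cocycle (Z2xZm m) \<psi> \<and> quasi_orthogonal (Z2xZm m) \<psi> \<and> \<not> coboundary (Z2xZm m) \<psi>"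
    by blast
next
  assume "\<exists>\<psi>. normalized_cocycle (Z2xZm m) \<psi> \<and> quasi_orthogonal (Z2xZm m) \<psi> \<and> \<not> coboundary (Z2xZm m) \<psi>"
  then obtain \<psi> where "cocycle (Z2xZm m) \<psi>" "quasi_orthogonal (Z2xZm m) \<psi>" "\<not> coboundary (Z2xZm m) \<psi>"
    unfolding normalized_cocycle_def by blast
  then show "\<exists>f. OQS m f"
    by (rule OQS_if_quasi_orthogonal_non_coboundary[OF assms(1)])
qed

end
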